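(* Let $X_0=0$ and $X_n=\sum_{j=1}^{X_{n-1}}\xi_{n,j}+\varepsilon_n$ for $n\ge 1$, where $\{\xi_{n,j},\varepsilon_n : n,j\in\mathbb N\}$ are independent nonnegative integer-valued random variables and, for each $n$, the $\xi_{n,j}$, $j\in\mathbb N$, are identically distributed. Let $G_n(x)=\mathbb E x^{\xi_{n,1}}$, $H_n(x)=\mathbb E x^{\varepsilon_n}$, $\rho_n=G_n'(1)$, and $m_{n,k}=H_n^{(k)}(1)=\mathbb E[\varepsilon_n(\varepsilon_n-1)\cdots(\varepsilon_n-k+1)]$, assumed finite for $k=1,2$, with $G_n''(1)<\infty$. Assume (i) $\rho_n<1$ for all $n$, $\lim_{n\to\infty}\rho_n=1$, $\sum_{n=1}^\infty(1-\rho_n)=\infty$, and $\lim_{n\to\infty}G_n''(1)/(1-\rho_n)=0$; (ii) $\lim_{n\to\infty} m_{n,1}/(1-\rho_n)=\lambda$ and $\lim_{n\to\infty} m_{n,2}/(1-\rho_n)=0$. Then $X_n$ converges in distribution to $\mathrm{Poisson}(\lambda)$.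
   Context: $\mathrm{Poisson}(0)$ denotes the point mass at $0$. *)

theory Defs
  imports "HOL-Probability.Probability"
begin

fun bpi :: "(nat \<Rightarrow> nat \<Rightarrow> 'a \<Rightarrow> nat) \<Rightarrow> (nat \<Rightarrow> 'a \<Rightarrow> nat) \<Rightarrow> nat \<Rightarrow> 'a \<Rightarrow> nat" where
  "bpi \<xi> \<epsilon> 0 \<omega> = 0"
| "bpi \<xi> \<epsilon> (Suc n) \<omega> = (\<Sum>j = 1..bpi \<xi> \<epsilon> n \<omega>. \<xi> (Suc n) j \<omega>) + \<epsilon> (Suc n) \<omega>"

definition falling :: "nat \<Rightarrow> nat \<Rightarrow> real" where
  "falling k x = (\<Prod>i<k. real x - real i)"

definition Poisson :: "real \<Rightarrow> nat pmf" where
  "Poisson lam = (if lam = 0 then return_pmf 0 else poisson_pmf lam)"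

end

theory Submission
  imports Defs
begin

(* Let F n z = E z^(X n) be the probability generating function (pgf) of generation n.
   Independence gives the recursion F (n+1) z = F n (G (n+1) z) * H (n+1) z.  Expanding the
   offspring pgf G and the immigration pgf H to second order at z = 1, an induction on n shows
   that on the unit disc |F n z - exp (a n (z - 1))| <= d n |z - 1|, where the mean a n and the
   error factor d n solve linear recursions x (k+1) = rho (k+1) x k + c k.  Since the defects
   1 - rho n are not summable, a discrete Gronwall argument gives a n --> lam and d n --> 0.
   So the pgfs, hence the characteristic functions, converge to those of Poisson(lam), and
   Levy's continuity theorem yields weak convergence. *)

text \<open>Solutions of the linear recursion x(k+1) = r k * x k + c k started at 0.
  Both the Poisson mean and the error factor of the approximation below are of this form.\<close>

fun lin_rec :: "(nat \<Rightarrow> real) \<Rightarrow> (nat \<Rightarrow> real) \<Rightarrow> nat \<Rightarrow> real" where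
  "lin_rec r c 0 = 0"
| "lin_rec r c (Suc k) = r k * lin_rec r c k + c k"

lemma lin_rec_nonneg:
  assumes "\<And>k. 0 \<le> r k" "\<And>k. 0 \<le> c k"
  shows "0 \<le> lin_rec r c n"
  by (induction n) (simp_all add: assms)

lemma prod_tendsto_zero_of_not_summable:
  fixes q :: "nat \<Rightarrow> real"
  assumes q: "\<And>i. 0 \<le> q i" "\<And>i. q i \<le> 1" and div: "\<not> summable (\<lambda>i. 1 - q i)"
  shows "(\<lambda>k. \<Prod>i<k. q i) \<longlonglongrightarrow> 0"
proof (rule LIMSEQ_I)
  fix e :: real assume e: "0 < e"
  have "\<exists>K. 1 / e < (\<Sum>i<K. 1 - q i)"
  proof (rule ccontr)
    assume "\<not> ?thesis"
    then have "summable (\<lambda>i. 1 - q i)"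
      using q by (intro summableI_nonneg_bounded[where x="1 / e"]) (auto simp: not_less)
    with div show False ..
  qed
  then obtain K where K: "1 / e < (\<Sum>i<K. 1 - q i)" by blast
  have "(\<Prod>i<k. q i) < e" if "K \<le> k" for k
  proof -
    define S where "S = (\<Sum>i<k. 1 - q i)"
    have "(\<Sum>i<K. 1 - q i) \<le> S"
      unfolding S_def using that q by (intro sum_mono2) auto
    with K e have S: "1 / e < S" "0 < S" by (auto intro: less_le_trans[of 0 "1/e"])
    have "(\<Prod>i<k. q i) \<le> (\<Prod>i<k. exp (q i - 1))"
      using q by (intro prod_mono) (auto intro: order.trans[OF _ exp_ge_add_one_self])
    also have "\<dots> = exp (- S)"
      by (simp add: S_def exp_sum[symmetric] sum_negf[symmetric])
    also have "\<dots> = 1 / exp S"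
      by (simp add: exp_minus field_simps)
    also have "\<dots> \<le> 1 / (1 + S)"
      using S by (intro divide_left_mono) (auto simp: exp_ge_add_one_self)
    also have "\<dots> < e"
      using S e by (simp add: field_simps)
    finally show ?thesis .
  qed
  then show "\<exists>K. \<forall>k\<ge>K. norm ((\<Prod>i<k. q i) - 0) < e"
    using q by (intro exI[of _ K]) (auto simp: prod_nonneg)
qed

lemma contract_to_zero:
  fixes x r c :: "nat \<Rightarrow> real"
  assumes x0: "\<And>n. 0 \<le> x n" and rec: "\<And>n. x (Suc n) \<le> r n * x n + c n"
    and r0: "\<And>n. 0 \<le> r n" and r1: "\<And>n. r n < 1"
    and c: "(\<lambda>n. c n / (1 - r n)) \<longlonglongrightarrow> 0"
    and div: "\<not> summable (\<lambda>n. 1 - r n)"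
  shows "x \<longlonglongrightarrow> 0"
proof (rule LIMSEQ_I)
  fix \<epsilon> :: real assume \<epsilon>: "0 < \<epsilon>"
  obtain N where N: "\<And>n. n \<ge> N \<Longrightarrow> norm (c n / (1 - r n) - 0) < \<epsilon>/2"
    using LIMSEQ_D[OF c half_gt_zero[OF \<epsilon>]] by blast
  have cN: "c n \<le> \<epsilon>/2 * (1 - r n)" if "n \<ge> N" for n
  proof -
    have "c n / (1 - r n) < \<epsilon>/2"
      using N[OF that] by (metis abs_ge_self le_less_trans real_norm_def diff_zero)
    moreover have "1 - r n > 0" using r1[of n] by simp
    ultimately show ?thesis by (simp add: divide_less_eq mult.commute)
  qed
  text \<open>Beyond \<open>N\<close>, the excess of \<open>x\<close> over \<open>\<epsilon>/2\<close> is contracted by the factors \<open>r\<close>.\<close>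
  define y where "y k = max (x (N + k) - \<epsilon>/2) 0" for k
  define q where "q i = r (N + i)" for i
  have ystep: "y (Suc k) \<le> q k * y k" for k
  proof -
    have "x (N + Suc k) \<le> r (N + k) * x (N + k) + \<epsilon>/2 * (1 - r (N + k))"
      using rec[of "N+k"] cN[of "N+k"] by simp
    then have "x (N + Suc k) - \<epsilon>/2 \<le> q k * (x (N + k) - \<epsilon>/2)"
      by (simp add: q_def algebra_simps)
    also have "\<dots> \<le> q k * y k"
      using r0[of "N+k"] by (intro mult_left_mono) (auto simp: q_def y_def)
    finally show ?thesis
      using r0[of "N+k"] by (auto simp: y_def q_def)
  qed
  have yprod: "y k \<le> (\<Prod>i<k. q i) * y 0" for k
  proof (induction k)
    case (Suc k)
    have "y (Suc k) \<le> q k * y k" by (rule ystep)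
    also have "\<dots> \<le> q k * ((\<Prod>i<k. q i) * y 0)"
      using Suc r0 by (intro mult_left_mono) (auto simp: q_def)
    finally show ?case by (simp add: algebra_simps)
  qed simp
  have "(\<lambda>k. (\<Prod>i<k. q i) * y 0) \<longlonglongrightarrow> 0 * y 0"
    using r0 r1 div summable_iff_shift[of "\<lambda>i. 1 - r i" N]
    by (intro tendsto_mult_right prod_tendsto_zero_of_not_summable) (auto simp: q_def less_imp_le add.commute)
  then obtain K where K: "\<And>k. k \<ge> K \<Longrightarrow> (\<Prod>i<k. q i) * y 0 < \<epsilon>/2"
    using LIMSEQ_D[OF _ half_gt_zero[OF \<epsilon>]] by fastforce
  have "x n < \<epsilon>" if "n \<ge> N + K" for n
  proof -
    have "K \<le> n - N" using that by simp
    with yprod[of "n - N"] K[of "n - N"] have "y (n - N) < \<epsilon>/2" by linarith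
    then show ?thesis using that by (simp add: y_def max_def split: if_splits)
  qed
  then show "\<exists>no. \<forall>n\<ge>no. norm (x n - 0) < \<epsilon>"
    using x0 by (intro exI[of _ "N+K"]) auto
qed

lemma lin_rec_tendsto:
  assumes r0: "\<And>k. 0 \<le> r k" and r1: "\<And>k. r k < 1"
    and div: "\<not> summable (\<lambda>k. 1 - r k)"
    and c: "(\<lambda>k. c k / (1 - r k)) \<longlonglongrightarrow> L"
  shows "lin_rec r c \<longlonglongrightarrow> L"
proof -
  have pos: "1 - r k > 0" for k using r1[of k] by simp
  have "(\<lambda>k. \<bar>lin_rec r c k - L\<bar>) \<longlonglongrightarrow> 0"
  proof (rule contract_to_zero[where r=r and c="\<lambda>k. \<bar>c k - L * (1 - r k)\<bar>"])
    show "\<bar>lin_rec r c (Suc k) - L\<bar> \<le> r k * \<bar>lin_rec r c k - L\<bar> + \<bar>c k - L * (1 - r k)\<bar>" for k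
    proof -
      have "lin_rec r c (Suc k) - L = r k * (lin_rec r c k - L) + (c k - L * (1 - r k))"
        by (simp add: algebra_simps)
      then have "\<bar>lin_rec r c (Suc k) - L\<bar> \<le> \<bar>r k * (lin_rec r c k - L)\<bar> + \<bar>c k - L * (1 - r k)\<bar>"
        by (metis abs_triangle_ineq)
      then show ?thesis using r0[of k] by (simp add: abs_mult)
    qed
    have "\<bar>c k - L * (1 - r k)\<bar> / (1 - r k) = \<bar>c k / (1 - r k) - L\<bar>" for k
      using pos[of k] by (simp add: field_simps)
    moreover have "(\<lambda>k. \<bar>c k / (1 - r k) - L\<bar>) \<longlonglongrightarrow> 0"
      using c by (simp add: tendsto_rabs_zero_iff LIM_zero_iff)
    ultimately show "(\<lambda>k. \<bar>c k - L * (1 - r k)\<bar> / (1 - r k)) \<longlonglongrightarrow> 0" by simp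
  qed (use r0 r1 div in auto)
  then show ?thesis by (simp add: tendsto_rabs_zero_iff LIM_zero_iff)
qed

lemma exp_approx_params_tendsto:
  fixes r s b c :: "nat \<Rightarrow> real"
  assumes r: "\<And>k. 0 \<le> r k" "\<And>k. r k < 1" and div: "\<not> summable (\<lambda>k. 1 - r k)"
    and r_lim: "r \<longlonglongrightarrow> 1" and b_nonneg: "\<And>k. 0 \<le> b k"
    and s: "(\<lambda>k. s k / (1 - r k)) \<longlonglongrightarrow> 0"
    and b: "(\<lambda>k. b k / (1 - r k)) \<longlonglongrightarrow> lam"
    and c: "(\<lambda>k. c k / (1 - r k)) \<longlonglongrightarrow> 0"
  shows "0 \<le> lam" and "lin_rec r b \<longlonglongrightarrow> lam"
    and "lin_rec r (\<lambda>k. c k + 2 * (b k)\<^sup>2 + lin_rec r b k * s k) \<longlonglongrightarrow> 0"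
proof -
  have "0 \<le> b k / (1 - r k)" for k using r(2)[of k] b_nonneg[of k] by simp
  then show "0 \<le> lam" by (intro LIMSEQ_le_const[OF b] exI[of _ 0] allI impI)
  show a: "lin_rec r b \<longlonglongrightarrow> lam"
    using r div b by (rule lin_rec_tendsto)
  have pos: "1 - r k \<noteq> 0" for k using r(2)[of k] by simp
  have "(\<lambda>k. b k / (1 - r k) * (1 - r k)) \<longlonglongrightarrow> lam * 0"
    using tendsto_diff[OF tendsto_const r_lim, of 1] by (intro tendsto_mult b) simp
  then have b_0: "b \<longlonglongrightarrow> 0" using pos by simp
  have "(\<lambda>k. c k / (1 - r k) + 2 * b k * (b k / (1 - r k)) + lin_rec r b k * (s k / (1 - r k)))
      \<longlonglongrightarrow> 0 + 2 * 0 * lam + lam * 0"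
    by (intro tendsto_intros c b_0 b a s)
  then have "(\<lambda>k. (c k + 2 * (b k)\<^sup>2 + lin_rec r b k * s k) / (1 - r k)) \<longlonglongrightarrow> 0"
    by (simp add: add_divide_distrib power2_eq_square mult.assoc)
  with r div show "lin_rec r (\<lambda>k. c k + 2 * (b k)\<^sup>2 + lin_rec r b k * s k) \<longlonglongrightarrow> 0"
    by (intro lin_rec_tendsto)
qed

lemma tendsto_exp_of_approx:
  fixes F :: "nat \<Rightarrow> complex" and a d :: "nat \<Rightarrow> real"
  assumes approx: "\<And>n. norm (F n - exp (of_real (a n) * w)) \<le> d n * norm w"
    and a: "a \<longlonglongrightarrow> lam" and d: "d \<longlonglongrightarrow> 0"
  shows "F \<longlonglongrightarrow> exp (of_real lam * w)"
proof -
  have "(\<lambda>n. F n - exp (of_real (a n) * w)) \<longlonglongrightarrow> 0"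
    using approx by (intro Lim_null_comparison[OF always_eventually tendsto_mult_left_zero[OF d]]) auto
  moreover have "(\<lambda>n. exp (of_real (a n) * w)) \<longlonglongrightarrow> exp (of_real lam * w)"
    by (intro tendsto_intros a)
  ultimately have "(\<lambda>n. (F n - exp (of_real (a n) * w)) + exp (of_real (a n) * w))
      \<longlonglongrightarrow> 0 + exp (of_real lam * w)"
    by (rule tendsto_add)
  then show ?thesis by simp
qed

lemma unit_disc_sub_one:
  fixes z :: complex assumes "norm z \<le> 1"
  shows "Re (z - 1) \<le> 0" "norm (z - 1) \<le> 2" "(norm (z - 1))\<^sup>2 \<le> 2 * norm (z - 1)"
proof -
  show "Re (z - 1) \<le> 0" using assms complex_Re_le_cmod[of z] by simp
  show nw: "norm (z - 1) \<le> 2" using assms norm_triangle_ineq4[of z 1] by simp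
  then show "(norm (z - 1))\<^sup>2 \<le> 2 * norm (z - 1)"
    by (simp add: power2_eq_square mult_right_mono)
qed

text \<open>Lipschitz and second order Taylor bounds for z ^ k on the unit disc; averaged over k
  they become the corresponding bounds for probability generating functions.\<close>

lemma pow_sub1:
  fixes z :: complex assumes "norm z \<le> 1"
  shows "norm (z ^ k - 1) \<le> real k * norm (z - 1)"
proof (induction k)
  case (Suc k)
  have "z ^ Suc k - 1 = z * (z ^ k - 1) + (z - 1)" by (simp add: algebra_simps)
  also have "norm \<dots> \<le> norm z * norm (z ^ k - 1) + norm (z - 1)"
    by (metis norm_mult norm_triangle_ineq)
  also have "\<dots> \<le> 1 * (real k * norm (z - 1)) + norm (z - 1)"
    using Suc assms by (intro add_mono mult_mono) auto
  finally show ?case by (simp add: algebra_simps)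
qed simp

lemma pow_taylor:
  fixes z :: complex assumes "norm z \<le> 1"
  shows "norm (z ^ k - 1 - of_nat k * (z - 1)) \<le> real k * (real k - 1) / 2 * (norm (z - 1))\<^sup>2"
proof (induction k)
  case (Suc k)
  have "z ^ Suc k - 1 - of_nat (Suc k) * (z - 1) = (z ^ k - 1 - of_nat k * (z - 1)) + (z - 1) * (z ^ k - 1)"
    by (simp add: algebra_simps)
  also have "norm \<dots> \<le> norm (z ^ k - 1 - of_nat k * (z - 1)) + norm (z - 1) * norm (z ^ k - 1)"
    by (metis norm_mult norm_triangle_ineq)
  also have "\<dots> \<le> real k * (real k - 1) / 2 * (norm (z - 1))\<^sup>2 + norm (z - 1) * (real k * norm (z - 1))"
    using Suc pow_sub1[OF assms, of k] by (intro add_mono mult_left_mono) auto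
  also have "\<dots> = real (Suc k) * (real (Suc k) - 1) / 2 * (norm (z - 1))\<^sup>2"
    by (simp add: field_simps power2_eq_square)
  finally show ?case .
qed simp

lemma exp_lipschitz:
  fixes x y :: complex assumes "Re x \<le> 0" "Re y \<le> 0"
  shows "norm (exp x - exp y) \<le> norm (x - y)"
proof -
  have "norm (exp x - exp y) \<le> 1 * norm (x - y)"
  proof (rule field_differentiable_bound[where S="{z. Re z \<le> 0}" and f'=exp])
    show "convex {z::complex. Re z \<le> 0}"
      by (simp add: convex_halfspace_Re_le)
    show "(exp has_field_derivative exp z) (at z within {z. Re z \<le> 0})" for z :: complex
      by (auto intro!: derivative_eq_intros)
    show "norm (exp z) \<le> 1" if "z \<in> {z. Re z \<le> 0}" for z :: complex
      using that by (simp add: norm_exp_eq_Re)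
  qed (use assms in auto)
  then show ?thesis by simp
qed

lemma exp_taylor1:
  fixes x :: complex assumes "Re x \<le> 0"
  shows "norm (exp x - 1 - x) \<le> (norm x)\<^sup>2"
proof -
  let ?S = "{z::complex. Re z \<le> 0} \<inter> cball 0 (norm x)"
  have "norm ((exp x - x) - (exp 0 - 0)) \<le> norm x * norm (x - 0)"
  proof (rule field_differentiable_bound[where S="?S" and f'="\<lambda>z. exp z - 1"])
    show "convex ?S"
      by (intro convex_Int convex_halfspace_Re_le convex_cball)
    show "((\<lambda>z. exp z - z) has_field_derivative exp z - 1) (at z within ?S)" for z :: complex
      by (auto intro!: derivative_eq_intros)
    show "norm (exp z - 1) \<le> norm x" if "z \<in> ?S" for z :: complex
      using exp_lipschitz[of z 0] that by auto
  qed (use assms in auto)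
  then show ?thesis by (simp add: power2_eq_square algebra_simps)
qed

lemma taylor_to_exp:
  fixes h w :: complex and b c :: real
  assumes w: "Re w \<le> 0" "(norm w)\<^sup>2 \<le> 2 * norm w" and bc: "0 \<le> b" "0 \<le> c"
    and h: "norm (h - 1 - of_real b * w) \<le> c / 2 * (norm w)\<^sup>2"
  shows "norm (h - exp (of_real b * w)) \<le> (c + 2 * b\<^sup>2) * norm w"
proof -
  have "Re (of_real b * w) \<le> 0" using w bc by (simp add: mult_nonneg_nonpos)
  from exp_taylor1[OF this]
  have e: "norm (exp (of_real b * w) - 1 - of_real b * w) \<le> b\<^sup>2 * (norm w)\<^sup>2"
    using bc by (simp add: norm_mult power_mult_distrib)
  have "norm (h - exp (of_real b * w))
      \<le> norm (h - 1 - of_real b * w) + norm (exp (of_real b * w) - 1 - of_real b * w)"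
    using norm_triangle_ineq4[of "h - 1 - of_real b * w" "exp (of_real b * w) - 1 - of_real b * w"]
    by simp
  also have "\<dots> \<le> (c / 2 + b\<^sup>2) * (norm w)\<^sup>2" using h e by (simp add: algebra_simps)
  also have "\<dots> \<le> (c / 2 + b\<^sup>2) * (2 * norm w)" using w bc by (intro mult_left_mono) auto
  finally show ?thesis by (simp add: algebra_simps)
qed

lemma exp_compose_close:
  fixes g w :: complex and a r s :: real
  assumes g: "norm g \<le> 1" and w: "Re w \<le> 0" "(norm w)\<^sup>2 \<le> 2 * norm w"
    and nonneg: "0 \<le> a" "0 \<le> r" "0 \<le> s"
    and taylor: "norm (g - 1 - of_real r * w) \<le> s / 2 * (norm w)\<^sup>2"
  shows "norm (exp (of_real a * (g - 1)) - exp (of_real (a * r) * w)) \<le> a * s * norm w"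
proof -
  have Re1: "Re (of_real a * (g - 1)) \<le> 0"
    using g complex_Re_le_cmod[of g] nonneg by (simp add: mult_nonneg_nonpos)
  have Re2: "Re (of_real (a * r) * w) \<le> 0" using w nonneg by (simp add: mult_nonneg_nonpos)
  have "norm (exp (of_real a * (g - 1)) - exp (of_real (a * r) * w))
      \<le> norm (of_real a * (g - 1) - of_real (a * r) * w)"
    using exp_lipschitz[OF Re1 Re2] .
  also have "of_real a * (g - 1) - of_real (a * r) * w = of_real a * (g - 1 - of_real r * w)"
    by (simp add: algebra_simps)
  also have "norm \<dots> \<le> a * (s / 2 * (2 * norm w))"
  proof -
    have "s / 2 * (norm w)\<^sup>2 \<le> s / 2 * (2 * norm w)" using w nonneg by (intro mult_left_mono) auto
    with taylor nonneg show ?thesis by (simp add: norm_mult mult_left_mono)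
  qed
  finally show ?thesis by simp
qed

lemma pgf_exp_step:
  fixes A g h z :: complex and a d r s b c :: real
  assumes z: "norm z \<le> 1"
    and A: "norm (A - exp (of_real a * (g - 1))) \<le> d * norm (g - 1)"
    and g_bound: "norm g \<le> 1" and h_bound: "norm h \<le> 1"
    and g_lip: "norm (g - 1) \<le> r * norm (z - 1)"
    and g_taylor: "norm (g - 1 - of_real r * (z - 1)) \<le> s / 2 * (norm (z - 1))\<^sup>2"
    and h_taylor: "norm (h - 1 - of_real b * (z - 1)) \<le> c / 2 * (norm (z - 1))\<^sup>2"
    and nonneg: "0 \<le> a" "0 \<le> d" "0 \<le> r" "0 \<le> s" "0 \<le> b" "0 \<le> c"
  shows "norm (A * h - exp (of_real (r * a + b) * (z - 1)))
           \<le> (r * d + (c + 2 * b\<^sup>2 + a * s)) * norm (z - 1)"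
proof -
  define w where "w = z - 1"
  define E1 where "E1 = exp (of_real a * (g - 1))"
  define E2 where "E2 = exp (of_real (a * r) * w)"
  define E3 where "E3 = exp (of_real b * w)"
  note w = unit_disc_sub_one[OF z, folded w_def]
  have split: "A * h - exp (of_real (r * a + b) * w) = (A - E1) * h + E1 * (h - E3) + (E1 - E2) * E3"
    by (simp add: E2_def E3_def exp_add[symmetric] algebra_simps)
  have err_inherited: "norm ((A - E1) * h) \<le> d * (r * norm w)"
  proof -
    have "norm ((A - E1) * h) \<le> norm (A - E1)"
      using h_bound by (simp add: norm_mult mult_left_le)
    also have "\<dots> \<le> d * (r * norm w)"
      using A g_lip nonneg unfolding E1_def w_def by (meson mult_left_mono order_trans)
    finally show ?thesis .
  qed
  have err_immigration: "norm (E1 * (h - E3)) \<le> (c + 2 * b\<^sup>2) * norm w"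
  proof -
    have "norm E1 \<le> 1"
      unfolding E1_def using g_bound complex_Re_le_cmod[of g] nonneg
      by (simp add: norm_exp_eq_Re mult_nonneg_nonpos)
    then have "norm (E1 * (h - E3)) \<le> norm (h - E3)"
      by (simp add: norm_mult mult_left_le_one_le)
    also have "\<dots> \<le> (c + 2 * b\<^sup>2) * norm w"
      unfolding E3_def using w nonneg h_taylor unfolding w_def by (intro taylor_to_exp) auto
    finally show ?thesis .
  qed
  have err_offspring: "norm ((E1 - E2) * E3) \<le> a * s * norm w"
  proof -
    have "norm E3 \<le> 1"
      unfolding E3_def using w nonneg by (simp add: norm_exp_eq_Re mult_nonneg_nonpos)
    then have "norm ((E1 - E2) * E3) \<le> norm (E1 - E2)"
      by (simp add: norm_mult mult_left_le)
    also have "\<dots> \<le> a * s * norm w"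
      unfolding E1_def E2_def using g_bound w nonneg g_taylor unfolding w_def
      by (intro exp_compose_close) auto
    finally show ?thesis .
  qed
  have "norm (A * h - exp (of_real (r * a + b) * w))
      \<le> d * (r * norm w) + (c + 2 * b\<^sup>2) * norm w + a * s * norm w"
    unfolding split using err_inherited err_immigration err_offspring
      norm_triangle_ineq[of "(A - E1) * h + E1 * (h - E3)" "(E1 - E2) * E3"]
      norm_triangle_ineq[of "(A - E1) * h" "E1 * (h - E3)"] by linarith
  then show ?thesis by (simp add: w_def algebra_simps)
qed

lemma pgf_recursion_exp_approx:
  fixes F :: "nat \<Rightarrow> complex \<Rightarrow> complex" and g h :: "nat \<Rightarrow> complex \<Rightarrow> complex"
    and r s b c :: "nat \<Rightarrow> real"
  assumes F0: "\<And>z. F 0 z = 1"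
    and F_Suc: "\<And>n z. norm z \<le> 1 \<Longrightarrow> F (Suc n) z = F n (g n z) * h n z"
    and g_bound: "\<And>n z. norm z \<le> 1 \<Longrightarrow> norm (g n z) \<le> 1"
    and h_bound: "\<And>n z. norm z \<le> 1 \<Longrightarrow> norm (h n z) \<le> 1"
    and g_lip: "\<And>n z. norm z \<le> 1 \<Longrightarrow> norm (g n z - 1) \<le> r n * norm (z - 1)"
    and g_taylor: "\<And>n z. norm z \<le> 1 \<Longrightarrow>
                     norm (g n z - 1 - of_real (r n) * (z - 1)) \<le> s n / 2 * (norm (z - 1))\<^sup>2"
    and h_taylor: "\<And>n z. norm z \<le> 1 \<Longrightarrow>
                     norm (h n z - 1 - of_real (b n) * (z - 1)) \<le> c n / 2 * (norm (z - 1))\<^sup>2"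
    and nonneg: "\<And>n. 0 \<le> r n" "\<And>n. 0 \<le> s n" "\<And>n. 0 \<le> b n" "\<And>n. 0 \<le> c n"
    and z: "norm z \<le> 1"
  shows "norm (F n z - exp (of_real (lin_rec r b n) * (z - 1)))
           \<le> lin_rec r (\<lambda>k. c k + 2 * (b k)\<^sup>2 + lin_rec r b k * s k) n * norm (z - 1)"
  using z
proof (induction n arbitrary: z)
  case 0 then show ?case by (simp add: F0)
next
  case (Suc n)
  have "norm (F n (g n z) * h n z - exp (of_real (r n * lin_rec r b n + b n) * (z - 1)))
      \<le> (r n * lin_rec r (\<lambda>k. c k + 2 * (b k)\<^sup>2 + lin_rec r b k * s k) n
          + (c n + 2 * (b n)\<^sup>2 + lin_rec r b n * s n)) * norm (z - 1)"
    using nonneg lin_rec_nonneg[of r b] lin_rec_nonneg[of r "\<lambda>k. c k + 2 * (b k)\<^sup>2 + lin_rec r b k * s k"]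
    by (intro pgf_exp_step[OF Suc.prems Suc.IH] g_bound h_bound g_lip g_taylor h_taylor Suc.prems) auto
  then show ?case using Suc.prems by (simp add: F_Suc)
qed

lemma falling_one: "falling 1 x = real x"
  by (simp add: falling_def)

lemma falling_two: "falling 2 x = real x * (real x - 1)"
  by (simp add: falling_def numeral_2_eq_2 lessThan_Suc)

lemma falling_nonneg: "0 \<le> falling k x"
proof (cases "x < k")
  case True
  then have "real x - real x = 0" "x \<in> {..<k}" by auto
  then show ?thesis unfolding falling_def by (metis prod_zero_iff finite_lessThan order_refl)
qed (auto simp: falling_def intro!: prod_nonneg)

lemma (in prob_space) pgf_moment_bounds:
  fixes Y :: "'a \<Rightarrow> nat" and z :: complex
  assumes [measurable]: "Y \<in> measurable M (count_space UNIV)"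
    and "integrable M (\<lambda>\<omega>. falling 1 (Y \<omega>))"
    and "integrable M (\<lambda>\<omega>. falling 2 (Y \<omega>))"
    and z: "norm z \<le> 1"
  shows "norm (LINT \<omega>|M. z ^ Y \<omega>) \<le> 1"
    and "norm ((LINT \<omega>|M. z ^ Y \<omega>) - 1) \<le> expectation (\<lambda>\<omega>. falling 1 (Y \<omega>)) * norm (z - 1)"
    and "norm ((LINT \<omega>|M. z ^ Y \<omega>) - 1 - of_real (expectation (\<lambda>\<omega>. falling 1 (Y \<omega>))) * (z - 1))
           \<le> expectation (\<lambda>\<omega>. falling 2 (Y \<omega>)) / 2 * (norm (z - 1))\<^sup>2"
  unfolding falling_one falling_two
proof -
  have int1: "integrable M (\<lambda>\<omega>. real (Y \<omega>))"
    and int2: "integrable M (\<lambda>\<omega>. real (Y \<omega>) * (real (Y \<omega>) - 1))"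
    using assms(2,3) unfolding falling_one falling_two by auto
  have pow_bound: "norm (z ^ k) \<le> 1" for k
    using z by (simp add: norm_power power_le_one)
  have int: "integrable M (\<lambda>\<omega>. z ^ Y \<omega>)"
    using pow_bound by (intro integrable_const_bound[where B=1]) auto
  have "norm (LINT \<omega>|M. z ^ Y \<omega>) \<le> (LINT \<omega>|M. norm (z ^ Y \<omega>))"
    by (rule integral_norm_bound)
  also have "\<dots> \<le> (LINT \<omega>|M. 1)"
    using pow_bound int by (intro integral_mono) auto
  finally show "norm (LINT \<omega>|M. z ^ Y \<omega>) \<le> 1" by (simp add: prob_space)
  have minus_1: "(LINT \<omega>|M. z ^ Y \<omega>) - 1 = (LINT \<omega>|M. z ^ Y \<omega> - 1)"
    using int by (simp add: prob_space)
  have "norm (LINT \<omega>|M. z ^ Y \<omega> - 1) \<le> (LINT \<omega>|M. norm (z ^ Y \<omega> - 1))"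
    by (rule integral_norm_bound)
  also have "\<dots> \<le> (LINT \<omega>|M. real (Y \<omega>) * norm (z - 1))"
    using int int1 pow_sub1[OF z] by (intro integral_mono) auto
  finally show "norm ((LINT \<omega>|M. z ^ Y \<omega>) - 1) \<le> (LINT \<omega>|M. real (Y \<omega>)) * norm (z - 1)"
    using minus_1 by simp
  have int1c: "integrable M (\<lambda>\<omega>. complex_of_real (real (Y \<omega>)) * (z - 1))"
    by (intro integrable_mult_left integrable_of_real int1)
  have "(LINT \<omega>|M. z ^ Y \<omega> - 1 - of_nat (Y \<omega>) * (z - 1))
      = (LINT \<omega>|M. z ^ Y \<omega> - 1) - (LINT \<omega>|M. complex_of_real (real (Y \<omega>)) * (z - 1))"
    using Bochner_Integration.integral_diff[OF _ int1c, of "\<lambda>\<omega>. z ^ Y \<omega> - 1"] int by simp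
  also have "(LINT \<omega>|M. complex_of_real (real (Y \<omega>)) * (z - 1)) = of_real (LINT \<omega>|M. real (Y \<omega>)) * (z - 1)"
    by (simp only: integral_mult_left_zero integral_complex_of_real)
  finally have linear_part: "(LINT \<omega>|M. z ^ Y \<omega>) - 1 - of_real (LINT \<omega>|M. real (Y \<omega>)) * (z - 1)
      = (LINT \<omega>|M. z ^ Y \<omega> - 1 - of_nat (Y \<omega>) * (z - 1))"
    using minus_1 by simp
  have "norm (LINT \<omega>|M. z ^ Y \<omega> - 1 - of_nat (Y \<omega>) * (z - 1))
      \<le> (LINT \<omega>|M. norm (z ^ Y \<omega> - 1 - of_nat (Y \<omega>) * (z - 1)))"
    by (rule integral_norm_bound)
  also have "\<dots> \<le> (LINT \<omega>|M. real (Y \<omega>) * (real (Y \<omega>) - 1) / 2 * (norm (z - 1))\<^sup>2)"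
    using int int1c int2 pow_taylor[OF z] by (intro integral_mono) auto
  finally show "norm ((LINT \<omega>|M. z ^ Y \<omega>) - 1 - of_real (LINT \<omega>|M. real (Y \<omega>)) * (z - 1))
       \<le> (LINT \<omega>|M. real (Y \<omega>) * (real (Y \<omega>) - 1)) / 2 * (norm (z - 1))\<^sup>2"
    using linear_part by simp
qed

definition bpi_vars :: "(nat \<Rightarrow> nat \<Rightarrow> 'a \<Rightarrow> nat) \<Rightarrow> (nat \<Rightarrow> 'a \<Rightarrow> nat) \<Rightarrow> (nat \<times> nat) + nat \<Rightarrow> 'a \<Rightarrow> nat"
  where "bpi_vars \<xi> \<epsilon> i = (case i of Inl (n, j) \<Rightarrow> \<xi> n j | Inr n \<Rightarrow> \<epsilon> n)"

definition bpi_index :: "((nat \<times> nat) + nat) set"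
  where "bpi_index = Inl ` ({1..} \<times> {1..}) \<union> Inr ` {1..}"

lemma bpi_cong:
  "(\<And>k j. 1 \<le> k \<Longrightarrow> k \<le> n \<Longrightarrow> 1 \<le> j \<Longrightarrow> \<xi>1 k j \<omega>1 = \<xi>2 k j \<omega>2) \<Longrightarrow>
   (\<And>k. 1 \<le> k \<Longrightarrow> k \<le> n \<Longrightarrow> \<epsilon>1 k \<omega>1 = \<epsilon>2 k \<omega>2) \<Longrightarrow>
   bpi \<xi>1 \<epsilon>1 n \<omega>1 = bpi \<xi>2 \<epsilon>2 n \<omega>2"
proof (induction n)
  case (Suc n)
  have "bpi \<xi>1 \<epsilon>1 n \<omega>1 = bpi \<xi>2 \<epsilon>2 n \<omega>2"
    using Suc.prems by (intro Suc.IH) auto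
  with Suc.prems show ?case by simp
qed simp

lemma bpi_measurable:
  "(\<And>k j. 1 \<le> k \<Longrightarrow> k \<le> n \<Longrightarrow> 1 \<le> j \<Longrightarrow> \<xi> k j \<in> measurable N (count_space UNIV)) \<Longrightarrow>
   (\<And>k. 1 \<le> k \<Longrightarrow> k \<le> n \<Longrightarrow> \<epsilon> k \<in> measurable N (count_space UNIV)) \<Longrightarrow>
   bpi \<xi> \<epsilon> n \<in> measurable N (count_space UNIV)"
proof (induction n)
  case 0 then show ?case by (simp add: bpi.simps(1)[abs_def])
next
  case (Suc n)
  have IH: "bpi \<xi> \<epsilon> n \<in> measurable N (count_space UNIV)"
    using Suc.prems by (intro Suc.IH) auto
  have step: "(\<lambda>\<omega>. (\<Sum>j=1..i. \<xi> (Suc n) j \<omega>) + \<epsilon> (Suc n) \<omega>) \<in> measurable N (count_space UNIV)" for i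
  proof -
    have [measurable]: "\<xi> (Suc n) j \<in> measurable N (count_space UNIV)" if "j \<in> {1..i}" for j
      using Suc.prems that by auto
    have [measurable]: "\<epsilon> (Suc n) \<in> measurable N (count_space UNIV)" using Suc.prems by auto
    show ?thesis by measurable
  qed
  show ?case using measurable_compose_countable[OF step IH] by simp
qed

lemma (in prob_space) bpi_vars_measurable:
  assumes "indep_vars (\<lambda>_. count_space UNIV) (bpi_vars \<xi> \<epsilon>) bpi_index"
  shows "\<And>k j. 1 \<le> k \<Longrightarrow> 1 \<le> j \<Longrightarrow> \<xi> k j \<in> measurable M (count_space UNIV)"
    and "\<And>k. 1 \<le> k \<Longrightarrow> \<epsilon> k \<in> measurable M (count_space UNIV)"
    and "\<And>n. bpi \<xi> \<epsilon> n \<in> measurable M (count_space UNIV)"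
proof -
  have V: "bpi_vars \<xi> \<epsilon> i \<in> measurable M (count_space UNIV)" if "i \<in> bpi_index" for i
    using assms that by (auto simp: indep_vars_def)
  show \<xi>: "\<xi> k j \<in> measurable M (count_space UNIV)" if "1 \<le> k" "1 \<le> j" for k j
    using V[of "Inl (k, j)"] that by (auto simp: bpi_vars_def bpi_index_def)
  show \<epsilon>: "\<epsilon> k \<in> measurable M (count_space UNIV)" if "1 \<le> k" for k
    using V[of "Inr k"] that by (auto simp: bpi_vars_def bpi_index_def)
  show "bpi \<xi> \<epsilon> n \<in> measurable M (count_space UNIV)" for n
    by (rule bpi_measurable) (auto intro: \<xi> \<epsilon>)
qed

lemma (in prob_space) indep_block_integral:
  fixes V :: "'i \<Rightarrow> 'a \<Rightarrow> 'b" and \<phi> :: "('i \<Rightarrow> 'b) \<Rightarrow> complex" and \<psi> :: "'i \<Rightarrow> 'b \<Rightarrow> complex"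
  assumes indep: "indep_vars (\<lambda>_. count_space UNIV) V I"
    and P: "P \<subseteq> I" and S: "finite S" "S \<subseteq> I" "P \<inter> S = {}"
    and \<phi>_meas: "\<phi> \<in> borel_measurable (PiM P (\<lambda>_. count_space UNIV))"
    and \<phi>_bound: "\<And>f. norm (\<phi> f) \<le> 1" and \<psi>_bound: "\<And>i b. norm (\<psi> i b) \<le> 1"
  shows "(LINT \<omega>|M. \<phi> (restrict (\<lambda>i. V i \<omega>) P) * (\<Prod>i\<in>S. \<psi> i (V i \<omega>)))
       = (LINT \<omega>|M. \<phi> (restrict (\<lambda>i. V i \<omega>) P)) * (\<Prod>i\<in>S. LINT \<omega>|M. \<psi> i (V i \<omega>))"
proof -
  define K where "K l = (case l of None \<Rightarrow> P | Some i \<Rightarrow> {i})" for l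
  define L where "L = insert None (Some ` S)"
  define \<Phi> where "\<Phi> l f = (case l of None \<Rightarrow> \<phi> f | Some i \<Rightarrow> \<psi> i (f i))" for l f
  define Y where "Y l \<omega> = \<Phi> l (restrict (\<lambda>i. V i \<omega>) (K l))" for l \<omega>
  have blocks: "indep_vars (\<lambda>l. PiM (K l) (\<lambda>_. count_space UNIV)) (\<lambda>l \<omega>. restrict (\<lambda>i. V i \<omega>) (K l)) L"
    using P S by (intro indep_vars_restrict[OF indep])
      (auto simp: K_def L_def disjoint_family_on_def split: option.splits)
  have "\<Phi> l \<in> borel_measurable (PiM (K l) (\<lambda>_. count_space UNIV))" for l
  proof (cases l)
    case (Some i)
    have "(\<lambda>f. f i) \<in> measurable (PiM {i} (\<lambda>_. count_space UNIV)) (count_space UNIV)"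
      by (rule measurable_component_singleton) simp
    from measurable_compose[OF this, of "\<psi> i" borel] show ?thesis
      using Some unfolding \<Phi>_def K_def by simp
  qed (simp add: \<Phi>_def[abs_def] K_def \<phi>_meas)
  then have indY: "indep_vars (\<lambda>_. borel) Y L"
    unfolding Y_def by (rule indep_vars_compose2[OF blocks])
  have "integrable M (Y l)" if "l \<in> L" for l
  proof (rule integrable_const_bound[where B=1])
    show "AE \<omega> in M. norm (Y l \<omega>) \<le> 1"
      using \<phi>_bound \<psi>_bound by (simp add: Y_def \<Phi>_def split: option.splits)
    show "Y l \<in> borel_measurable M" using indY that by (auto simp: indep_vars_def)
  qed
  then have "(LINT \<omega>|M. (\<Prod>l\<in>L. Y l \<omega>)) = (\<Prod>l\<in>L. LINT \<omega>|M. Y l \<omega>)"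
    using S by (intro indep_vars_lebesgue_integral[OF _ indY]) (auto simp: L_def)
  moreover have "(\<Prod>l\<in>L. F l) = F None * (\<Prod>i\<in>S. F (Some i))" for F :: "'i option \<Rightarrow> complex"
    using S by (simp add: L_def prod.reindex)
  ultimately show ?thesis by (simp add: Y_def \<Phi>_def K_def)
qed

text \<open>On the event X n = x, the next generation is the sum of x offspring variables and one
  immigration variable, all independent of X n.\<close>

lemma (in prob_space) bpi_slice_factor:
  fixes z :: complex
  assumes indep: "indep_vars (\<lambda>_. count_space UNIV) (bpi_vars \<xi> \<epsilon>) bpi_index"
    and z: "norm z \<le> 1"
  shows "(LINT \<omega>|M. (if bpi \<xi> \<epsilon> n \<omega> = x then z ^ bpi \<xi> \<epsilon> (Suc n) \<omega> else 0))
       = (LINT \<omega>|M. (if bpi \<xi> \<epsilon> n \<omega> = x then 1 else 0))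
         * (\<Prod>j=1..x. LINT \<omega>|M. z ^ \<xi> (Suc n) j \<omega>) * (LINT \<omega>|M. z ^ \<epsilon> (Suc n) \<omega>)"
proof -
  let ?V = "bpi_vars \<xi> \<epsilon>"
  text \<open>Generation \<open>n\<close> is a function of the variables with first index at most \<open>n\<close>.\<close>
  define P :: "((nat \<times> nat) + nat) set" where "P = Inl ` ({1..n} \<times> {1..}) \<union> Inr ` {1..n}"
  define bp where "bp f = bpi (\<lambda>k j f. f (Inl (k, j))) (\<lambda>k f. f (Inr k)) n f"
    for f :: "(nat \<times> nat) + nat \<Rightarrow> nat"
  define \<phi> :: "((nat \<times> nat) + nat \<Rightarrow> nat) \<Rightarrow> complex" where "\<phi> f = (if bp f = x then 1 else 0)" for f
  define S where "S = insert (Inr (Suc n)) ((\<lambda>j. Inl (Suc n, j)) ` {1..x})"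
  have "bp \<in> measurable (PiM P (\<lambda>_. count_space UNIV)) (count_space UNIV)"
    unfolding bp_def[abs_def]
    by (rule bpi_measurable) (auto simp: P_def intro!: measurable_component_singleton)
  then have \<phi>_meas: "\<phi> \<in> borel_measurable (PiM P (\<lambda>_. count_space UNIV))"
    unfolding \<phi>_def[abs_def] by measurable
  have bp_eq: "bp (restrict (\<lambda>i. ?V i \<omega>) P) = bpi \<xi> \<epsilon> n \<omega>" for \<omega>
    unfolding bp_def by (rule bpi_cong) (auto simp: P_def bpi_vars_def)
  have S_prod: "(\<Prod>i\<in>S. F i) = F (Inr (Suc n)) * (\<Prod>j=1..x. F (Inl (Suc n, j)))"
    for F :: "(nat \<times> nat) + nat \<Rightarrow> complex"
    unfolding S_def by (subst prod.insert) (auto simp: prod.reindex inj_on_def)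
  have "(LINT \<omega>|M. \<phi> (restrict (\<lambda>i. ?V i \<omega>) P) * (\<Prod>i\<in>S. z ^ ?V i \<omega>))
      = (LINT \<omega>|M. \<phi> (restrict (\<lambda>i. ?V i \<omega>) P)) * (\<Prod>i\<in>S. LINT \<omega>|M. z ^ ?V i \<omega>)"
    using z by (intro indep_block_integral[OF indep _ _ _ _ \<phi>_meas])
      (auto simp: P_def S_def bpi_index_def \<phi>_def norm_power power_le_one)
  moreover have "\<phi> (restrict (\<lambda>i. ?V i \<omega>) P) * (\<Prod>i\<in>S. z ^ ?V i \<omega>)
      = (if bpi \<xi> \<epsilon> n \<omega> = x then z ^ bpi \<xi> \<epsilon> (Suc n) \<omega> else 0)" for \<omega>
    by (simp add: \<phi>_def bp_eq S_prod) (simp add: bpi_vars_def power_add power_sum mult.commute)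
  ultimately show ?thesis
    by (simp add: \<phi>_def bp_eq S_prod) (simp add: bpi_vars_def mult.commute mult.left_commute)
qed

lemma (in prob_space) integral_sums_by_value:
  fixes X :: "'a \<Rightarrow> nat" and f :: "'a \<Rightarrow> complex"
  assumes X[measurable]: "X \<in> measurable M (count_space UNIV)"
    and f[measurable]: "f \<in> borel_measurable M" and f_bound: "\<And>\<omega>. \<omega> \<in> space M \<Longrightarrow> norm (f \<omega>) \<le> 1"
  shows "(\<lambda>x. LINT \<omega>|M. (if X \<omega> = x then f \<omega> else 0)) sums (LINT \<omega>|M. f \<omega>)"
proof -
  define g where "g x \<omega> = (if X \<omega> = x then f \<omega> else 0)" for x \<omega>
  have [measurable]: "g x \<in> borel_measurable M" for x
    unfolding g_def by measurable
  have g_int: "integrable M (g x)" for x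
    using f_bound by (intro integrable_const_bound[where B=1]) (auto simp: g_def)
  have "(\<lambda>x. integral\<^sup>L M (g x)) sums (LINT \<omega>|M. (\<Sum>x. g x \<omega>))"
  proof (rule sums_integral[OF g_int])
    show "AE \<omega> in M. summable (\<lambda>x. norm (g x \<omega>))"
      by (intro AE_I2 summable_finite[of "{X \<omega>}" for \<omega>]) (auto simp: g_def)
    have "(\<Sum>x<K. LINT \<omega>|M. norm (g x \<omega>)) \<le> 1" for K
    proof -
      have "(\<Sum>x<K. LINT \<omega>|M. norm (g x \<omega>)) = (LINT \<omega>|M. (\<Sum>x<K. norm (g x \<omega>)))"
        using g_int by (subst Bochner_Integration.integral_sum) (auto intro: integrable_norm)
      also have "\<dots> \<le> (LINT \<omega>|M. 1)"
      proof (rule integral_mono)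
        show "(\<Sum>x<K. norm (g x \<omega>)) \<le> 1" if "\<omega> \<in> space M" for \<omega>
        proof -
          have "(\<Sum>x<K. norm (g x \<omega>)) = (\<Sum>x<K. if x = X \<omega> then norm (f \<omega>) else 0)"
            by (intro sum.cong) (auto simp: g_def)
          also have "\<dots> \<le> 1" using f_bound[OF that] by (simp add: sum.delta')
          finally show ?thesis .
        qed
      qed (use g_int in auto)
      finally show ?thesis by (simp add: prob_space)
    qed
    then show "summable (\<lambda>x. LINT \<omega>|M. norm (g x \<omega>))"
      by (intro summableI_nonneg_bounded) auto
  qed
  also have "(LINT \<omega>|M. (\<Sum>x. g x \<omega>)) = (LINT \<omega>|M. f \<omega>)"
    using sums_single[of "X \<omega>" "\<lambda>_. f \<omega>" for \<omega>] unfolding g_def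
    by (intro Bochner_Integration.integral_cong) (simp_all add: sums_iff eq_commute)
  finally show ?thesis unfolding g_def .
qed

lemma (in prob_space) bpi_pgf_recursion:
  fixes z :: complex
  assumes indep: "indep_vars (\<lambda>_. count_space UNIV) (bpi_vars \<xi> \<epsilon>) bpi_index"
    and ident: "\<And>j. j \<ge> 1 \<Longrightarrow>
                  distr M (count_space UNIV) (\<xi> (Suc n) j) = distr M (count_space UNIV) (\<xi> (Suc n) 1)"
    and z: "norm z \<le> 1"
  shows "(LINT \<omega>|M. z ^ bpi \<xi> \<epsilon> (Suc n) \<omega>)
       = (LINT \<omega>|M. (LINT \<omega>'|M. z ^ \<xi> (Suc n) 1 \<omega>') ^ bpi \<xi> \<epsilon> n \<omega>) * (LINT \<omega>|M. z ^ \<epsilon> (Suc n) \<omega>)"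
proof -
  note meas = bpi_vars_measurable[OF indep]
  define X where "X = bpi \<xi> \<epsilon> n"
  define g where "g = (LINT \<omega>|M. z ^ \<xi> (Suc n) 1 \<omega>)"
  define h where "h = (LINT \<omega>|M. z ^ \<epsilon> (Suc n) \<omega>)"
  have [measurable]: "X \<in> measurable M (count_space UNIV)" unfolding X_def by (rule meas)
  have [measurable]: "\<xi> (Suc n) 1 \<in> measurable M (count_space UNIV)" by (rule meas) auto
  have z_pow: "norm (z ^ k) \<le> 1" for k using z by (simp add: norm_power power_le_one)
  have g_bound: "norm g \<le> 1"
  proof -
    have "norm g \<le> (LINT \<omega>|M. norm (z ^ \<xi> (Suc n) 1 \<omega>))" unfolding g_def by (rule integral_norm_bound)
    also have "\<dots> \<le> (LINT \<omega>|M. 1)"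
      using z_pow by (intro integral_mono integrable_const_bound[where B=1]) (auto simp del: One_nat_def)
    finally show ?thesis by (simp add: prob_space)
  qed
  have g_j: "(LINT \<omega>|M. z ^ \<xi> (Suc n) j \<omega>) = g" if "1 \<le> j" for j
  proof -
    have "(LINT \<omega>|M. z ^ \<xi> (Suc n) j \<omega>) = integral\<^sup>L (distr M (count_space UNIV) (\<xi> (Suc n) j)) (\<lambda>k. z ^ k)"
      using that meas by (subst integral_distr) auto
    also have "\<dots> = integral\<^sup>L (distr M (count_space UNIV) (\<xi> (Suc n) 1)) (\<lambda>k. z ^ k)"
      using ident[OF that] by simp
    also have "\<dots> = g" unfolding g_def using meas by (subst integral_distr) auto
    finally show ?thesis .
  qed
  have by_value_X: "(\<lambda>x. LINT \<omega>|M. (if X \<omega> = x then g ^ X \<omega> else 0)) sums (LINT \<omega>|M. g ^ X \<omega>)"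
    using g_bound by (intro integral_sums_by_value) (auto simp: norm_power power_le_one)
  have "(LINT \<omega>|M. (if X \<omega> = x then g ^ X \<omega> else 0)) = (LINT \<omega>|M. (if X \<omega> = x then 1 else 0)) * g ^ x" for x
    by (subst integral_mult_left_zero[symmetric]) (rule Bochner_Integration.integral_cong, auto)
  then have "(\<lambda>x. LINT \<omega>|M. (if X \<omega> = x then z ^ bpi \<xi> \<epsilon> (Suc n) \<omega> else 0)) sums ((LINT \<omega>|M. g ^ X \<omega>) * h)"
    using sums_mult2[OF by_value_X, of h]
    by (simp add: X_def h_def bpi_slice_factor[OF indep z] g_j)
  moreover have "(\<lambda>x. LINT \<omega>|M. (if X \<omega> = x then z ^ bpi \<xi> \<epsilon> (Suc n) \<omega> else 0))
      sums (LINT \<omega>|M. z ^ bpi \<xi> \<epsilon> (Suc n) \<omega>)"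
    using z_pow meas by (intro integral_sums_by_value) auto
  ultimately show ?thesis
    unfolding X_def g_def h_def using sums_unique2 by blast
qed

lemma char_Poisson:
  assumes "0 \<le> lam"
  shows "char (distr (measure_pmf (Poisson lam)) borel real) t = exp (of_real lam * (iexp t - 1))"
proof (cases "lam = 0")
  case True
  have "char (distr (measure_pmf (Poisson lam)) borel real) t
      = (LINT k|measure_pmf (return_pmf (0::nat)). iexp (t * real k))"
    unfolding char_def True Poisson_def by (subst integral_distr) auto
  also have "\<dots> = 1" by (subst integral_measure_pmf[of "{0}"]) auto
  finally show ?thesis using True by simp
next
  case False
  with assms have lam: "lam > 0" by simp
  let ?f = "\<lambda>k. pmf (poisson_pmf lam) k *\<^sub>R iexp (t * real k)"
  have "char (distr (measure_pmf (Poisson lam)) borel real) t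
      = (LINT k|measure_pmf (poisson_pmf lam). iexp (t * real k))"
    unfolding char_def Poisson_def using False by (subst integral_distr) auto
  also have "\<dots> = (LINT k|count_space UNIV. ?f k)"
    unfolding measure_pmf_eq_density by (subst integral_density) auto
  finally have char_eq: "char (distr (measure_pmf (Poisson lam)) borel real) t = (LINT k|count_space UNIV. ?f k)" .
  have term_eq: "?f k = of_real (exp (-lam)) * ((of_real lam * iexp t) ^ k /\<^sub>R fact k)" for k
  proof -
    have "iexp (t * real k) = iexp t ^ k"
      by (subst exp_of_nat_mult[symmetric]) (simp add: algebra_simps)
    then show ?thesis using lam by (simp add: scaleR_conv_of_real power_mult_distrib field_simps)
  qed
  have series: "?f sums (of_real (exp (-lam)) * exp (of_real lam * iexp t))"
    unfolding term_eq by (intro sums_mult exp_converges)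
  have "summable (\<lambda>k. pmf (poisson_pmf lam) k)"
  proof -
    have "summable (\<lambda>k. lam ^ k /\<^sub>R fact k * exp (-lam))"
      using exp_converges[of lam] by (intro summable_mult2 sums_summable)
    then show ?thesis using lam by (simp add: divide_inverse mult.commute mult.left_commute)
  qed
  then have "integrable (count_space UNIV) ?f"
    by (simp add: integrable_count_space_nat_iff norm_exp_eq_Re)
  from sums_integral_count_space_nat[OF this] series
  have "(LINT k|count_space UNIV. ?f k) = of_real (exp (-lam)) * exp (of_real lam * iexp t)"
    using sums_unique2 by blast
  also have "\<dots> = exp (of_real lam * (iexp t - 1))"
    by (simp add: exp_of_real[symmetric] exp_add[symmetric] algebra_simps)
  finally show ?thesis using char_eq by simp
qed

lemma (in prob_space) weak_conv_Poisson_from_pgf: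
  fixes X :: "nat \<Rightarrow> 'a \<Rightarrow> nat"
  assumes X: "\<And>n. X n \<in> measurable M (count_space UNIV)" and lam: "0 \<le> lam"
    and pgf: "\<And>z::complex. norm z = 1 \<Longrightarrow> (\<lambda>n. LINT \<omega>|M. z ^ X n \<omega>) \<longlonglongrightarrow> exp (of_real lam * (z - 1))"
  shows "weak_conv_m (\<lambda>n. distr M borel (\<lambda>\<omega>. real (X n \<omega>))) (distr (measure_pmf (Poisson lam)) borel real)"
proof (rule levy_continuity)
  have rv: "random_variable borel (\<lambda>\<omega>. real (X n \<omega>))" for n
    using X[of n] by measurable
  then show "real_distribution (distr M borel (\<lambda>\<omega>. real (X n \<omega>)))" for n
    by (rule real_distribution_distr)
  show "real_distribution (distr (measure_pmf (Poisson lam)) borel real)"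
    by (rule prob_space.real_distribution_distr[OF prob_space_measure_pmf]) simp
  fix t
  have "char (distr M borel (\<lambda>\<omega>. real (X n \<omega>))) t = (LINT \<omega>|M. iexp t ^ X n \<omega>)" for n
  proof -
    have "char (distr M borel (\<lambda>\<omega>. real (X n \<omega>))) t = (LINT \<omega>|M. iexp (t * real (X n \<omega>)))"
      unfolding char_def by (subst integral_distr[OF rv]) auto
    also have "\<dots> = (LINT \<omega>|M. iexp t ^ X n \<omega>)"
      by (intro Bochner_Integration.integral_cong refl)
        (subst exp_of_nat_mult[symmetric], simp add: algebra_simps)
    finally show ?thesis .
  qed
  then show "(\<lambda>n. char (distr M borel (\<lambda>\<omega>. real (X n \<omega>))) t)
      \<longlonglongrightarrow> char (distr (measure_pmf (Poisson lam)) borel real) t"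
    unfolding char_Poisson[OF lam] by (simp add: pgf[of "iexp t"] norm_exp_eq_Re)
qed

theorem theorem2:
  fixes M :: "'a measure"
    and \<xi> :: "nat \<Rightarrow> nat \<Rightarrow> 'a \<Rightarrow> nat"
    and \<epsilon> :: "nat \<Rightarrow> 'a \<Rightarrow> nat"
    and \<rho> G2 m1 m2 :: "nat \<Rightarrow> real"
    and lam :: real
  assumes "prob_space M"
    and indep: "prob_space.indep_vars M (\<lambda>_. count_space UNIV)
                  (\<lambda>i. case i of Inl (n, j) \<Rightarrow> \<xi> n j | Inr n \<Rightarrow> \<epsilon> n)
                  (Inl ` ({1..} \<times> {1..}) \<union> Inr ` {1..})"
    and ident: "\<And>n j. n \<ge> 1 \<Longrightarrow> j \<ge> 1 \<Longrightarrow>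
                  distr M (count_space UNIV) (\<xi> n j) = distr M (count_space UNIV) (\<xi> n 1)"
    and int_xi: "\<And>n k. n \<ge> 1 \<Longrightarrow> k \<in> {1, 2} \<Longrightarrow> integrable M (\<lambda>\<omega>. falling k (\<xi> n 1 \<omega>))"
    and int_eps: "\<And>n k. n \<ge> 1 \<Longrightarrow> k \<in> {1, 2} \<Longrightarrow> integrable M (\<lambda>\<omega>. falling k (\<epsilon> n \<omega>))"
    and rho_def: "\<And>n. \<rho> n = prob_space.expectation M (\<lambda>\<omega>. falling 1 (\<xi> n 1 \<omega>))"
    and G2_def: "\<And>n. G2 n = prob_space.expectation M (\<lambda>\<omega>. falling 2 (\<xi> n 1 \<omega>))"
    and m1_def: "\<And>n. m1 n = prob_space.expectation M (\<lambda>\<omega>. falling 1 (\<epsilon> n \<omega>))"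
    and m2_def: "\<And>n. m2 n = prob_space.expectation M (\<lambda>\<omega>. falling 2 (\<epsilon> n \<omega>))"
    and rho_lt: "\<And>n. n \<ge> 1 \<Longrightarrow> \<rho> n < 1"
    and rho_lim: "\<rho> \<longlonglongrightarrow> 1"
    and rho_sum: "\<not> summable (\<lambda>n. 1 - \<rho> (Suc n))"
    and G2_lim: "(\<lambda>n. G2 n / (1 - \<rho> n)) \<longlonglongrightarrow> 0"
    and m1_lim: "(\<lambda>n. m1 n / (1 - \<rho> n)) \<longlonglongrightarrow> lam"
    and m2_lim: "(\<lambda>n. m2 n / (1 - \<rho> n)) \<longlonglongrightarrow> 0"
  shows "weak_conv_m (\<lambda>n. distr M borel (\<lambda>\<omega>. real (bpi \<xi> \<epsilon> n \<omega>)))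
           (distr (measure_pmf (Poisson lam)) borel real)"
proof -
  interpret prob_space M by fact
  have indep': "indep_vars (\<lambda>_. count_space UNIV) (bpi_vars \<xi> \<epsilon>) bpi_index"
    using indep by (simp add: bpi_vars_def[abs_def] bpi_index_def)
  note meas = bpi_vars_measurable[OF indep']
  have \<xi>_meas: "\<xi> (Suc n) 1 \<in> measurable M (count_space UNIV)"
    and \<epsilon>_meas: "\<epsilon> (Suc n) \<in> measurable M (count_space UNIV)" for n
    using meas(1,2) by auto
  have \<xi>_int: "integrable M (\<lambda>\<omega>. falling 1 (\<xi> (Suc n) 1 \<omega>))" "integrable M (\<lambda>\<omega>. falling 2 (\<xi> (Suc n) 1 \<omega>))"
    and \<epsilon>_int: "integrable M (\<lambda>\<omega>. falling 1 (\<epsilon> (Suc n) \<omega>))" "integrable M (\<lambda>\<omega>. falling 2 (\<epsilon> (Suc n) \<omega>))"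
    for n using int_xi int_eps by auto
  note pgf_\<xi> = pgf_moment_bounds[OF \<xi>_meas \<xi>_int, folded rho_def G2_def]
  note pgf_\<epsilon> = pgf_moment_bounds[OF \<epsilon>_meas \<epsilon>_int, folded m1_def m2_def]
  have nonneg: "0 \<le> \<rho> n" "0 \<le> G2 n" "0 \<le> m1 n" "0 \<le> m2 n" for n
    unfolding rho_def G2_def m1_def m2_def by (simp_all add: falling_nonneg)
  define a where "a = lin_rec (\<lambda>k. \<rho> (Suc k)) (\<lambda>k. m1 (Suc k))"
  define d where "d = lin_rec (\<lambda>k. \<rho> (Suc k)) (\<lambda>k. m2 (Suc k) + 2 * (m1 (Suc k))\<^sup>2 + a k * G2 (Suc k))"
  have approx: "norm ((LINT \<omega>|M. z ^ bpi \<xi> \<epsilon> n \<omega>) - exp (of_real (a n) * (z - 1))) \<le> d n * norm (z - 1)"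
    if "norm z \<le> 1" for n and z :: complex
    unfolding a_def d_def
  proof (rule pgf_recursion_exp_approx[where F="\<lambda>n z. LINT \<omega>|M. z ^ bpi \<xi> \<epsilon> n \<omega>"
        and g="\<lambda>n z. LINT \<omega>|M. z ^ \<xi> (Suc n) 1 \<omega>" and h="\<lambda>n z. LINT \<omega>|M. z ^ \<epsilon> (Suc n) \<omega>"
        and r="\<lambda>k. \<rho> (Suc k)" and s="\<lambda>k. G2 (Suc k)" and b="\<lambda>k. m1 (Suc k)" and c="\<lambda>k. m2 (Suc k)"])
    show "(LINT \<omega>|M. z ^ bpi \<xi> \<epsilon> (Suc n) \<omega>)
        = (LINT \<omega>|M. (LINT \<omega>'|M. z ^ \<xi> (Suc n) 1 \<omega>') ^ bpi \<xi> \<epsilon> n \<omega>) * (LINT \<omega>|M. z ^ \<epsilon> (Suc n) \<omega>)"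
      if "norm z \<le> 1" for n and z :: complex
      using that by (intro bpi_pgf_recursion[OF indep'] ident) simp_all
  qed (use that pgf_\<xi> pgf_\<epsilon> nonneg in \<open>simp_all add: prob_space\<close>)
  have lam: "0 \<le> lam" and a_lim: "a \<longlonglongrightarrow> lam" and d_lim: "d \<longlonglongrightarrow> 0"
    unfolding a_def d_def
    using exp_approx_params_tendsto[OF nonneg(1) _ rho_sum LIMSEQ_Suc[OF rho_lim] nonneg(3)
        LIMSEQ_Suc[OF G2_lim] LIMSEQ_Suc[OF m1_lim] LIMSEQ_Suc[OF m2_lim]] rho_lt by simp_all
  show ?thesis
  proof (rule weak_conv_Poisson_from_pgf[OF meas(3) lam])
    fix z :: complex assume "norm z = 1"
    then show "(\<lambda>n. LINT \<omega>|M. z ^ bpi \<xi> \<epsilon> n \<omega>) \<longlonglongrightarrow> exp (of_real lam * (z - 1))"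
      by (intro tendsto_exp_of_approx[OF _ a_lim d_lim] approx) simp
  qed
qed

end
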